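(* Let $0<\alpha<1$, $T>0$, $N_T$ a positive integer, $\Delta t=T/N_T$, $t_k=k\Delta t$, and let $\tilde s_i>0,\ \tilde w_i>0$ ($i=1,\dots,N_A$) satisfy $\left|t^{-\alpha}-\sum_{i=1}^{N_A}\tilde w_ie^{-\tilde s_it}\right|\le\varepsilon_0$ for all $t\in[\Delta t,T]$. Let $1\le n\le N_T$, $u\in C^2[0,t_n]$, $u^k=u(t_k)$, and $$R:={}^C_0D_t^\alpha u(t)\big|_{t=t_n}-\mathbb{D}_t^\alpha u^n.$$ Then $$|R|\le\frac{\Delta t^{2-\alpha}}{\Gamma(2-\alpha)}\Big(\frac{1-\alpha}{12}+\frac{2^{2-\alpha}}{2-\alpha}-(1+2^{-\alpha})\Big)\max_{0\le t\le t_n}|u''(t)|+\frac{\varepsilon_0\,t_{n-1}}{\Gamma(1-\alpha)}\max_{0\le t\le t_{n-1}}|u'(t)|.$$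
   Context: The Caputo derivative is ${}^C_0D_t^\alpha u(t)=\frac{1}{\Gamma(1-\alpha)}\int_0^t\frac{u'(\tau)}{(t-\tau)^\alpha}d\tau$. For a sequence $(u^k)_{k\ge0}$, the FIDR operator is $$\mathbb{D}_t^\alpha u^n=\frac{u^n-u^{n-1}}{\Delta t^\alpha\Gamma(2-\alpha)}+\frac{1}{\Gamma(1-\alpha)}\sum_{i=1}^{N_A}\tilde w_i\tilde\Psi_i^n,$$ where $\tilde\Psi_i^1=0$ and, for $n\ge2$, $\tilde\Psi_i^n=e^{-\tilde s_i\Delta t}\tilde\Psi_i^{n-1}+\frac{(u^{n-1}-u^{n-2})(1-e^{-\tilde s_i\Delta t})e^{-\tilde s_i\Delta t}}{\tilde s_i\Delta t}$. *)

theory Defs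
  imports "HOL-Analysis.Analysis"
begin

text \<open>Caputo derivative of order alpha at time t, expressed through the
  derivative function du = u' (integral over [0,t], singular at the endpoint).\<close>
definition caputo :: "real \<Rightarrow> (real \<Rightarrow> real) \<Rightarrow> real \<Rightarrow> real" where
  "caputo \<alpha> du t = 1 / Gamma (1 - \<alpha>) * integral {0..t} (\<lambda>\<tau>. du \<tau> / (t - \<tau>) powr \<alpha>)"

text \<open>History variable Psi_i^n for one node s, time step dt and sequence u.
  Psi^1 = 0; Psi^0 is not used (set to 0).\<close>
fun fidr_psi :: "real \<Rightarrow> real \<Rightarrow> (nat \<Rightarrow> real) \<Rightarrow> nat \<Rightarrow> real" where
  "fidr_psi s dt u 0 = 0"
| "fidr_psi s dt u (Suc 0) = 0"
| "fidr_psi s dt u (Suc (Suc m)) =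
     exp (- s * dt) * fidr_psi s dt u (Suc m)
     + (u (Suc m) - u m) * (1 - exp (- s * dt)) * exp (- s * dt) / (s * dt)"

definition fidr :: "real \<Rightarrow> real \<Rightarrow> nat \<Rightarrow> (nat \<Rightarrow> real) \<Rightarrow> (nat \<Rightarrow> real)
                     \<Rightarrow> (nat \<Rightarrow> real) \<Rightarrow> nat \<Rightarrow> real" where
  "fidr \<alpha> dt NA s w u n =
     (u n - u (n - 1)) / (dt powr \<alpha> * Gamma (2 - \<alpha>))
     + 1 / Gamma (1 - \<alpha>) * (\<Sum>i = 1..NA. w i * fidr_psi (s i) dt u n)"

end

theory Submission
  imports Defs
begin

(* Split [0, t_n] into the cells [t_j, t_(j+1)] and compare u' on each cell with the
   difference quotient of u.  Integrating by parts against the kernel (t_n - tau) powr (-alpha),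
   the deviation on a cell is controlled by the interpolation error of u, which is at most
   max|u''| (tau - t_j) (t_(j+1) - tau) / 2, weighted by alpha (t_n - tau) powr (-alpha - 1).
   These weight integrals are computed exactly on the last two cells; on the earlier cells they
   are bounded by a telescoping sum, contributing at most dt powr (2 - alpha) / 12 in total.
   Unrolling the FIDR recursion shows that the operator applies the same quadrature to the
   difference quotients, except that on all cells but the last the kernel is replaced by its
   exponential-sum approximation; this costs at most eps0 dt max|u'| per cell. *)

section \<open>Interpolation error against the kernel\<close>

lemma second_derivative_vanishes_between_zeros:
  fixes f f' f'' :: "real \<Rightarrow> real"
  assumes as: "a < s" and sb: "s < b" and zeros: "f a = 0" "f s = 0" "f b = 0"
    and fc: "continuous_on {a..b} f"
    and d1: "\<And>x. a < x \<Longrightarrow> x < b \<Longrightarrow> (f has_real_derivative f' x) (at x)"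
    and d2: "\<And>x. a < x \<Longrightarrow> x < b \<Longrightarrow> (f' has_real_derivative f'' x) (at x)"
  obtains z where "a < z" "z < b" "f'' z = 0"
proof -
  have f_diff: "f differentiable (at x)" if "a < x" "x < b" for x
    using d1[OF that] real_differentiable_def by blast
  obtain z1 where z1: "a < z1" "z1 < s" "DERIV f z1 :> 0"
    using Rolle[of a s f] as sb zeros continuous_on_subset[OF fc, of "{a..s}"] f_diff by force
  obtain z2 where z2: "s < z2" "z2 < b" "DERIV f z2 :> 0"
    using Rolle[of s b f] as sb zeros continuous_on_subset[OF fc, of "{s..b}"] f_diff by force
  have "f' z1 = 0" "f' z2 = 0"
    using DERIV_unique[OF d1 z1(3)] DERIV_unique[OF d1 z2(3)] z1 z2 as sb by auto
  moreover have "continuous_on {z1..z2} f'"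
    by (rule DERIV_atLeastAtMost_imp_continuous_on)
      (use d2 z1 z2 as sb in \<open>meson less_le_trans le_less_trans\<close>)
  moreover have "f' differentiable (at x)" if "z1 < x" "x < z2" for x
    using d2[of x] that z1 z2 as sb real_differentiable_def by force
  ultimately obtain z where z: "z1 < z" "z < z2" "DERIV f' z :> 0"
    using Rolle[of z1 z2 f'] z1 z2 as sb by force
  then show ?thesis
    using that[of z] DERIV_unique[OF d2 z(3)] z1 z2 as sb by auto
qed

lemma interpolation_error_bound:
  fixes g g1 g2 :: "real \<Rightarrow> real"
  assumes ab: "a < b" and ga: "g a = 0" and gb: "g b = 0" and gc: "continuous_on {a..b} g"
    and d1: "\<And>x. a < x \<Longrightarrow> x < b \<Longrightarrow> (g has_real_derivative g1 x) (at x)"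
    and d2: "\<And>x. a < x \<Longrightarrow> x < b \<Longrightarrow> (g1 has_real_derivative g2 x) (at x)"
    and bd: "\<And>x. a < x \<Longrightarrow> x < b \<Longrightarrow> \<bar>g2 x\<bar> \<le> M"
    and s: "s \<in> {a..b}"
  shows "\<bar>g s\<bar> \<le> M / 2 * ((s - a) * (b - s))"
proof (cases "s = a \<or> s = b")
  case True
  then show ?thesis using ga gb by auto
next
  case False
  then have s1: "a < s" "s < b" using s by auto
  \<comment> \<open>Subtract the parabola through the three zeros a, b and (s, g s).\<close>
  define l where "l = g s / ((s - a) * (b - s))"
  define \<psi> where "\<psi> x = g x - l * ((x - a) * (b - x))" for x
  have d\<psi>: "(\<psi> has_real_derivative g1 x - l * (a + b - 2 * x)) (at x)" if "a < x" "x < b" for x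
    unfolding \<psi>_def by (rule derivative_eq_intros d1 that refl | simp add: algebra_simps)+
  have d\<psi>1: "((\<lambda>x. g1 x - l * (a + b - 2 * x)) has_real_derivative (g2 x + 2 * l)) (at x)"
    if "a < x" "x < b" for x
    by (rule derivative_eq_intros d2 that refl | simp add: algebra_simps)+
  have \<psi>c: "continuous_on {a..b} \<psi>" unfolding \<psi>_def by (intro continuous_intros gc)
  have "\<psi> a = 0" "\<psi> s = 0" "\<psi> b = 0" using ga gb s1 by (auto simp: \<psi>_def l_def)
  from second_derivative_vanishes_between_zeros[OF s1 this \<psi>c d\<psi> d\<psi>1]
  obtain z where z: "a < z" "z < b" "g2 z + 2 * l = 0" by blast
  then have "\<bar>l\<bar> \<le> M / 2" using bd[of z] by auto
  moreover have "g s = l * ((s - a) * (b - s))" using s1 by (simp add: l_def)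
  moreover have "(s - a) * (b - s) > 0" using s1 by auto
  ultimately show ?thesis
    by (metis abs_mult abs_of_pos mult_right_mono less_imp_le)
qed

lemma continuous_on_powr_diff:
  fixes p c :: real
  assumes "0 < p"
  shows "continuous_on {..c} (\<lambda>\<tau>. (c - \<tau>) powr p)"
  by (rule continuous_on_powr') (use assms in \<open>auto intro!: continuous_intros\<close>)

lemma has_real_derivative_powr_diff:
  fixes c x p :: real
  assumes "x < c"
  shows "((\<lambda>\<tau>. (c - \<tau>) powr p) has_real_derivative (- p * (c - x) powr (p - 1))) (at x)"
proof -
  have "((\<lambda>\<tau>. c - \<tau>) has_real_derivative -1) (at x)"
    by (rule derivative_eq_intros refl | simp)+
  from DERIV_fun_powr[OF this, of p] show ?thesis using assms by simp
qed

lemma powr_quotient_forms: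
  fixes y \<alpha> :: real
  assumes "0 < y"
  shows "y powr (- \<alpha>) = 1 / y powr \<alpha>"
    and "y powr (1 - \<alpha>) = y / y powr \<alpha>"
    and "y powr (2 - \<alpha>) = y ^ 2 / y powr \<alpha>"
    and "y powr (- \<alpha> - 1) = 1 / (y * y powr \<alpha>)"
proof -
  show "y powr (- \<alpha>) = 1 / y powr \<alpha>" by (simp add: powr_minus_divide)
  show "y powr (1 - \<alpha>) = y / y powr \<alpha>" using assms by (simp add: powr_diff)
  have "y powr (2::real) = y ^ 2" using assms by (simp add: powr_numeral)
  then show "y powr (2 - \<alpha>) = y ^ 2 / y powr \<alpha>" using assms by (simp add: powr_diff)
  show "y powr (- \<alpha> - 1) = 1 / (y * y powr \<alpha>)"
    using assms by (simp add: powr_diff powr_minus_divide mult.commute)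
qed

lemma kernel_has_integral:
  fixes \<alpha> a b c :: real
  assumes al: "0 < \<alpha>" "\<alpha> < 1" and ab: "a \<le> b" "b \<le> c"
  shows "((\<lambda>\<tau>. (c - \<tau>) powr (- \<alpha>)) has_integral
           ((c - a) powr (1 - \<alpha>) - (c - b) powr (1 - \<alpha>)) / (1 - \<alpha>)) {a..b}"
proof -
  define P where "P \<tau> = - ((c - \<tau>) powr (1 - \<alpha>)) / (1 - \<alpha>)" for \<tau>
  have "continuous_on {a..b} P"
    unfolding P_def
    by (intro continuous_on_divide continuous_on_minus continuous_on_const
        continuous_on_subset[OF continuous_on_powr_diff]) (use al ab in auto)
  moreover have "(P has_vector_derivative (c - x) powr (- \<alpha>)) (at x)" if "x \<in> {a<..<b}" for x
  proof -
    have "(P has_real_derivative - (- (1 - \<alpha>) * (c - x) powr (1 - \<alpha> - 1)) / (1 - \<alpha>)) (at x)"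
      unfolding P_def
      by (intro DERIV_cdivide DERIV_minus has_real_derivative_powr_diff) (use that ab in auto)
    moreover have "- (- (1 - \<alpha>) * (c - x) powr (1 - \<alpha> - 1)) / (1 - \<alpha>) = (c - x) powr (- \<alpha>)"
      using al by (simp add: field_simps)
    ultimately show ?thesis by (simp add: has_real_derivative_iff_has_vector_derivative)
  qed
  ultimately have "((\<lambda>\<tau>. (c - \<tau>) powr (- \<alpha>)) has_integral (P b - P a)) {a..b}"
    by (rule fundamental_theorem_of_calculus_interior[OF ab(1)])
  then show ?thesis by (simp add: P_def diff_divide_distrib)
qed

lemma continuous_mult_kernel_integrable:
  fixes f :: "real \<Rightarrow> real"
  assumes al: "0 < \<alpha>" "\<alpha> < 1" and ab: "a \<le> b" "b \<le> c" and f: "continuous_on {a..b} f"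
  shows "(\<lambda>\<tau>. f \<tau> * (c - \<tau>) powr (- \<alpha>)) integrable_on {a..b}"
proof -
  have "(\<lambda>\<tau>. (c - \<tau>) powr (- \<alpha>)) absolutely_integrable_on {a..b}"
    by (rule nonnegative_absolutely_integrable_1[OF
          has_integral_integrable[OF kernel_has_integral[OF al ab]]]) simp
  then have "(\<lambda>\<tau>. f \<tau> * (c - \<tau>) powr (- \<alpha>)) absolutely_integrable_on {a..b}"
  proof (rule absolutely_integrable_bounded_measurable_product_real[rotated 3])
    show "f \<in> borel_measurable (lebesgue_on {a..b})"
      by (rule continuous_imp_measurable_on_sets_lebesgue[OF f]) simp
    show "bounded (f ` {a..b})" by (intro compact_imp_bounded compact_continuous_image f) simp
  qed simp
  then show ?thesis by (simp add: absolutely_integrable_on_def)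
qed

lemma continuous_on_mult_kernel_vanishing:
  fixes g :: "real \<Rightarrow> real"
  assumes \<alpha>: "\<alpha> < 1" and bc: "b \<le> c" and gc: "continuous_on {a..b} g"
    and bound: "\<And>\<tau>. \<tau> \<in> {a..b} \<Longrightarrow> \<bar>g \<tau>\<bar> \<le> L * (c - \<tau>)"
  shows "continuous_on {a..b} (\<lambda>\<tau>. g \<tau> * (c - \<tau>) powr (- \<alpha>))"
  unfolding continuous_on_eq_continuous_within
proof
  fix x assume x: "x \<in> {a..b}"
  define F where "F \<tau> = g \<tau> * (c - \<tau>) powr (- \<alpha>)" for \<tau>
  show "continuous (at x within {a..b}) F"
  proof (cases "x < c")
    case True
    have "continuous_on {..<c} (\<lambda>\<tau>. (c - \<tau>) powr (- \<alpha>))"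
      by (intro continuous_intros) auto
    then have "continuous (at x within {a..b}) (\<lambda>\<tau>. (c - \<tau>) powr (- \<alpha>))"
      using True by (simp add: continuous_on_eq_continuous_at continuous_at_imp_continuous_at_within)
    moreover have "continuous (at x within {a..b}) g"
      using gc x by (simp add: continuous_on_eq_continuous_within)
    ultimately show ?thesis unfolding F_def by (intro continuous_mult)
  next
    case False
    then have xc: "x = c" using x bc by auto
    \<comment> \<open>At the singular endpoint, F is squeezed by L (c - \<tau>) powr (1 - \<alpha>), which tends to 0.\<close>
    define B where "B \<tau> = L * (c - \<tau>) powr (1 - \<alpha>)" for \<tau>
    have "continuous_on {a..b} B"
      unfolding B_def
      by (intro continuous_on_mult_left continuous_on_subset[OF continuous_on_powr_diff])
        (use \<alpha> bc in auto)
    then have "(B \<longlongrightarrow> B x) (at x within {a..b})"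
      using x by (simp add: continuous_on_def)
    moreover have "B x = 0" using xc \<alpha> by (simp add: B_def)
    moreover have "norm (F \<tau>) \<le> B \<tau>" if "\<tau> \<in> {a..b}" for \<tau>
    proof (cases "\<tau> = c")
      case True
      then show ?thesis using \<alpha> by (simp add: F_def B_def)
    next
      case False
      then have ct: "0 < c - \<tau>" using that bc by auto
      have "norm (F \<tau>) = \<bar>g \<tau>\<bar> * (c - \<tau>) powr (- \<alpha>)" by (simp add: F_def abs_mult)
      also have "\<dots> \<le> L * (c - \<tau>) * (c - \<tau>) powr (- \<alpha>)"
        using bound[OF that] by (rule mult_right_mono) simp
      also have "\<dots> = B \<tau>" using ct by (simp add: B_def powr_quotient_forms)
      finally show ?thesis .
    qed
    ultimately have "(F \<longlongrightarrow> 0) (at x within {a..b})"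
      by (intro Lim_null_comparison[of F B]) (auto simp: eventually_at_filter)
    moreover have "F x = 0" using xc by (simp add: F_def)
    ultimately show ?thesis by (simp add: continuous_within)
  qed
qed

lemma integral_kernel_by_parts:
  fixes g g' :: "real \<Rightarrow> real"
  assumes al: "0 < \<alpha>" "\<alpha> < 1" and ab: "a < b" "b \<le> c"
    and ga: "g a = 0" and gb: "g b = 0"
    and gc: "continuous_on {a..b} g" and g'c: "continuous_on {a..b} g'"
    and dg: "\<And>x. a < x \<Longrightarrow> x < b \<Longrightarrow> (g has_real_derivative g' x) (at x)"
    and bound: "\<And>\<tau>. \<tau> \<in> {a..b} \<Longrightarrow> \<bar>g \<tau>\<bar> \<le> L * (c - \<tau>)"
  shows "(\<lambda>\<tau>. \<alpha> * (c - \<tau>) powr (- \<alpha> - 1) * g \<tau>) integrable_on {a..b}"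
    and "integral {a..b} (\<lambda>\<tau>. g' \<tau> * (c - \<tau>) powr (- \<alpha>))
           = - integral {a..b} (\<lambda>\<tau>. \<alpha> * (c - \<tau>) powr (- \<alpha> - 1) * g \<tau>)"
proof -
  define K where "K \<tau> = (c - \<tau>) powr (- \<alpha>)" for \<tau>
  define K1 where "K1 \<tau> = \<alpha> * (c - \<tau>) powr (- \<alpha> - 1)" for \<tau>
  define F where "F \<tau> = g \<tau> * K \<tau>" for \<tau>
  \<comment> \<open>The growth bound on g keeps F continuous up to \<tau> = c, so b = c (the last cell) is allowed.\<close>
  have "continuous_on {a..b} F"
    unfolding F_def K_def by (rule continuous_on_mult_kernel_vanishing[OF al(2) ab(2) gc bound])
  moreover have "(F has_vector_derivative (g' x * K x + K1 x * g x)) (at x)"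
    if "x \<in> {a<..<b}" for x
  proof -
    have "(K has_real_derivative K1 x) (at x)"
      unfolding K_def K1_def using has_real_derivative_powr_diff[of x c "- \<alpha>"] that ab by simp
    then show ?thesis
      unfolding F_def using DERIV_mult[OF dg] that
      by (auto simp: has_real_derivative_iff_has_vector_derivative mult.commute)
  qed
  ultimately have FTC: "((\<lambda>x. g' x * K x + K1 x * g x) has_integral (F b - F a)) {a..b}"
    using fundamental_theorem_of_calculus_interior[of a b F] ab by simp
  have int1: "(\<lambda>x. g' x * K x) integrable_on {a..b}"
    unfolding K_def by (rule continuous_mult_kernel_integrable[OF al less_imp_le[OF ab(1)] ab(2) g'c])
  show int2: "(\<lambda>\<tau>. \<alpha> * (c - \<tau>) powr (- \<alpha> - 1) * g \<tau>) integrable_on {a..b}"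
    using integrable_diff[OF has_integral_integrable[OF FTC] int1] by (simp add: K1_def)
  show "integral {a..b} (\<lambda>\<tau>. g' \<tau> * (c - \<tau>) powr (- \<alpha>))
      = - integral {a..b} (\<lambda>\<tau>. \<alpha> * (c - \<tau>) powr (- \<alpha> - 1) * g \<tau>)"
    using integral_add[OF int1 int2[folded K1_def]] integral_unique[OF FTC]
    by (simp add: F_def K_def K1_def ga gb)
qed

lemma kernel_integral_slope_deviation_bound:
  fixes u du ddu :: "real \<Rightarrow> real" and \<alpha> a b c M J :: real
  assumes al: "0 < \<alpha>" "\<alpha> < 1" and ab: "a < b" "b \<le> c"
    and cu: "continuous_on {a..b} u" and cdu: "continuous_on {a..b} du"
    and d1: "\<And>x. a < x \<Longrightarrow> x < b \<Longrightarrow> (u has_real_derivative du x) (at x)"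
    and d2: "\<And>x. a < x \<Longrightarrow> x < b \<Longrightarrow> (du has_real_derivative ddu x) (at x)"
    and bd: "\<And>x. a < x \<Longrightarrow> x < b \<Longrightarrow> \<bar>ddu x\<bar> \<le> M"
    and J: "((\<lambda>\<tau>. (\<tau> - a) * (b - \<tau>) * (c - \<tau>) powr (- \<alpha> - 1)) has_integral J) {a..b}"
  shows "\<bar>integral {a..b} (\<lambda>\<tau>. (du \<tau> - (u b - u a) / (b - a)) * (c - \<tau>) powr (- \<alpha>))\<bar>
           \<le> M / 2 * \<alpha> * J"
proof -
  define \<delta> where "\<delta> = (u b - u a) / (b - a)"
  define g where "g \<tau> = u \<tau> - u a - (\<tau> - a) * \<delta>" for \<tau>
  have ga: "g a = 0" and gb: "g b = 0" using ab by (simp_all add: g_def \<delta>_def)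
  have gc: "continuous_on {a..b} g" unfolding g_def by (intro continuous_intros cu)
  have dg: "(g has_real_derivative (du x - \<delta>)) (at x)" if "a < x" "x < b" for x
    unfolding g_def by (rule derivative_eq_intros d1 that refl | simp)+
  have dg1: "((\<lambda>x. du x - \<delta>) has_real_derivative ddu x) (at x)" if "a < x" "x < b" for x
    by (rule derivative_eq_intros d2 that refl | simp)+
  have g_bound: "\<bar>g \<tau>\<bar> \<le> M / 2 * ((\<tau> - a) * (b - \<tau>))" if "\<tau> \<in> {a..b}" for \<tau>
    by (rule interpolation_error_bound[OF ab(1) ga gb gc dg dg1 bd that])
  have M0: "0 \<le> M" using bd[of "(a + b) / 2"] ab by force
  have g_lin: "\<bar>g \<tau>\<bar> \<le> M / 2 * (b - a) * (c - \<tau>)" if \<tau>: "\<tau> \<in> {a..b}" for \<tau>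
  proof -
    have "(\<tau> - a) * (b - \<tau>) \<le> (b - a) * (c - \<tau>)"
      using \<tau> ab by (intro mult_mono) auto
    from order_trans[OF g_bound[OF \<tau>] mult_left_mono[OF this]] show ?thesis
      using M0 by (simp add: mult.assoc)
  qed
  have "continuous_on {a..b} (\<lambda>x. du x - \<delta>)" by (intro continuous_intros cdu)
  note by_parts = integral_kernel_by_parts[OF al ab ga gb gc this dg g_lin]
  have slope_deviation_eq: "integral {a..b} (\<lambda>\<tau>. (du \<tau> - \<delta>) * (c - \<tau>) powr (- \<alpha>))
      = - integral {a..b} (\<lambda>\<tau>. \<alpha> * (c - \<tau>) powr (- \<alpha> - 1) * g \<tau>)"
    by (rule by_parts(2))
  have "norm (integral {a..b} (\<lambda>\<tau>. \<alpha> * (c - \<tau>) powr (- \<alpha> - 1) * g \<tau>))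
      \<le> integral {a..b} (\<lambda>\<tau>. M / 2 * \<alpha> * ((\<tau> - a) * (b - \<tau>) * (c - \<tau>) powr (- \<alpha> - 1)))"
  proof (rule integral_norm_bound_integral[OF by_parts(1)])
    show "(\<lambda>\<tau>. M / 2 * \<alpha> * ((\<tau> - a) * (b - \<tau>) * (c - \<tau>) powr (- \<alpha> - 1))) integrable_on {a..b}"
      using J by (intro integrable_on_mult_right) blast
  next
    fix \<tau> assume \<tau>: "\<tau> \<in> {a..b}"
    have K1_nonneg: "0 \<le> \<alpha> * (c - \<tau>) powr (- \<alpha> - 1)" using al by simp
    have "norm (\<alpha> * (c - \<tau>) powr (- \<alpha> - 1) * g \<tau>)
        \<le> \<alpha> * (c - \<tau>) powr (- \<alpha> - 1) * (M / 2 * ((\<tau> - a) * (b - \<tau>)))"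
      unfolding real_norm_def abs_mult[of "\<alpha> * (c - \<tau>) powr (- \<alpha> - 1)"] abs_of_nonneg[OF K1_nonneg]
      by (rule mult_left_mono[OF g_bound[OF \<tau>] K1_nonneg])
    then show "norm (\<alpha> * (c - \<tau>) powr (- \<alpha> - 1) * g \<tau>)
        \<le> M / 2 * \<alpha> * ((\<tau> - a) * (b - \<tau>) * (c - \<tau>) powr (- \<alpha> - 1))"
      by (simp add: mult_ac)
  qed
  also have "\<dots> = M / 2 * \<alpha> * J" using integral_mult_right integral_unique[OF J] by simp
  finally show ?thesis unfolding \<delta>_def[symmetric] slope_deviation_eq by simp
qed

section \<open>Weight integrals\<close>

lemma weight_last_antiderivative:
  fixes \<alpha> a b x :: real
  assumes al: "0 < \<alpha>" "\<alpha> < 1" and x: "x < b"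
  shows "((\<lambda>\<tau>. - ((b - a) / (1 - \<alpha>)) * (b - \<tau>) powr (1 - \<alpha>) + 1 / (2 - \<alpha>) * (b - \<tau>) powr (2 - \<alpha>))
           has_real_derivative (x - a) * (b - x) * (b - x) powr (- \<alpha> - 1)) (at x)"
proof -
  have y: "0 < b - x" using x by simp
  have n1: "1 - \<alpha> \<noteq> 0" and n2: "2 - \<alpha> \<noteq> 0" using al by auto
  have e: "1 - \<alpha> - 1 = - \<alpha>" "2 - \<alpha> - 1 = 1 - \<alpha>" by simp_all
  define q where "q = (b - x) powr \<alpha>"
  have q0: "q > 0" using y by (simp add: q_def)
  have t1: "- ((b - a) / (1 - \<alpha>)) * (- (1 - \<alpha>) * (1 / q)) = (b - a) / q"
    using n1 q0 by (simp add: field_simps)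
  have t2: "1 / (2 - \<alpha>) * (- (2 - \<alpha>) * ((b - x) / q)) = - ((b - x) / q)"
    using n2 q0 by (simp add: field_simps)
  have t3: "(x - a) * (b - x) * (1 / ((b - x) * q)) = (x - a) / q"
    using y q0 by (simp add: field_simps)
  have "- ((b - a) / (1 - \<alpha>)) * (- (1 - \<alpha>) * (b - x) powr (1 - \<alpha> - 1))
         + 1 / (2 - \<alpha>) * (- (2 - \<alpha>) * (b - x) powr (2 - \<alpha> - 1))
         = (x - a) * (b - x) * (b - x) powr (- \<alpha> - 1)"
    unfolding e powr_quotient_forms[OF y] q_def[symmetric] t1 t2 t3
    using q0 by (simp add: field_simps)
  moreover have "((\<lambda>\<tau>. - ((b - a) / (1 - \<alpha>)) * (b - \<tau>) powr (1 - \<alpha>) + 1 / (2 - \<alpha>) * (b - \<tau>) powr (2 - \<alpha>))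
      has_real_derivative
        - ((b - a) / (1 - \<alpha>)) * (- (1 - \<alpha>) * (b - x) powr (1 - \<alpha> - 1))
         + 1 / (2 - \<alpha>) * (- (2 - \<alpha>) * (b - x) powr (2 - \<alpha> - 1))) (at x)"
    using x by (intro DERIV_add DERIV_cmult has_real_derivative_powr_diff)
  ultimately show ?thesis by simp
qed

lemma weight_has_integral_last:
  fixes \<alpha> a b :: real
  assumes al: "0 < \<alpha>" "\<alpha> < 1" and ab: "a < b"
  shows "((\<lambda>\<tau>. (\<tau> - a) * (b - \<tau>) * (b - \<tau>) powr (- \<alpha> - 1)) has_integral
           (b - a) powr (2 - \<alpha>) / ((1 - \<alpha>) * (2 - \<alpha>))) {a..b}"
proof -
  define P where "P \<tau> = - ((b - a) / (1 - \<alpha>)) * (b - \<tau>) powr (1 - \<alpha>)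
                     + 1 / (2 - \<alpha>) * (b - \<tau>) powr (2 - \<alpha>)" for \<tau>
  have n1: "1 - \<alpha> \<noteq> 0" and n2: "2 - \<alpha> \<noteq> 0" using al by auto
  have "continuous_on {a..b} P"
    unfolding P_def
    by (intro continuous_on_add continuous_on_mult_left
        continuous_on_subset[OF continuous_on_powr_diff]) (use al in auto)
  moreover have "(P has_vector_derivative ((x - a) * (b - x) * (b - x) powr (- \<alpha> - 1))) (at x)"
    if "x \<in> {a<..<b}" for x
    unfolding P_def has_real_derivative_iff_has_vector_derivative[symmetric]
    by (rule weight_last_antiderivative[OF al]) (use that in simp)
  ultimately have "((\<lambda>x. (x - a) * (b - x) * (b - x) powr (- \<alpha> - 1)) has_integral (P b - P a)) {a..b}"
    using fundamental_theorem_of_calculus_interior[of a b P] ab by simp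
  moreover have "P b - P a = (b - a) powr (2 - \<alpha>) / ((1 - \<alpha>) * (2 - \<alpha>))"
  proof -
    have y: "0 < b - a" using ab by simp
    define r where "r = (b - a) powr \<alpha>"
    have factor: "z / (1 - \<alpha>) * (z / r) - 1 / (2 - \<alpha>) * (z ^ 2 / r)
        = z ^ 2 / r * (1 / (1 - \<alpha>) - 1 / (2 - \<alpha>))" for z
      by (simp add: right_diff_distrib power2_eq_square mult.commute)
    have "P b - P a = (b - a) / (1 - \<alpha>) * ((b - a) / r) - 1 / (2 - \<alpha>) * ((b - a) ^ 2 / r)"
      using al unfolding P_def powr_quotient_forms[OF y] r_def[symmetric] by simp
    also have "\<dots> = (b - a) ^ 2 / r * (1 / (1 - \<alpha>) - 1 / (2 - \<alpha>))"
      by (rule factor)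
    also have "\<dots> = (b - a) ^ 2 / r / ((1 - \<alpha>) * (2 - \<alpha>))"
      using n1 n2 by (simp add: field_simps)
    finally show ?thesis unfolding powr_quotient_forms[OF y] r_def .
  qed
  ultimately show ?thesis by simp
qed

definition penultimate_weight :: "real \<Rightarrow> real" where
  "penultimate_weight \<alpha> = (1 / (2 - \<alpha>) - 3 / (1 - \<alpha>) - 2 / \<alpha>)
                          - (4 / (2 - \<alpha>) - 6 / (1 - \<alpha>) - 2 / \<alpha>) / 2 powr \<alpha>"

lemma weight_penultimate_antiderivative:
  fixes \<alpha> a h x :: real
  assumes al: "0 < \<alpha>" "\<alpha> < 1" and x: "x < a + 2 * h"
  shows "((\<lambda>\<tau>. 1 / (2 - \<alpha>) * (a + 2 * h - \<tau>) powr (2 - \<alpha>)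
                 - 3 * h / (1 - \<alpha>) * (a + 2 * h - \<tau>) powr (1 - \<alpha>)
                 - 2 * h ^ 2 / \<alpha> * (a + 2 * h - \<tau>) powr (- \<alpha>))
           has_real_derivative (x - a) * ((a + h) - x) * (a + 2 * h - x) powr (- \<alpha> - 1)) (at x)"
proof -
  define c where "c = a + 2 * h"
  have y: "0 < c - x" using x by (simp add: c_def)
  have n1: "1 - \<alpha> \<noteq> 0" and n2: "2 - \<alpha> \<noteq> 0" and n0: "\<alpha> \<noteq> 0" using al by auto
  have e: "1 - \<alpha> - 1 = - \<alpha>" "2 - \<alpha> - 1 = 1 - \<alpha>" by simp_all
  define q where "q = (c - x) powr \<alpha>"
  have q0: "q > 0" using y by (simp add: q_def)
  have shift: "x - a = 2 * h - (c - x)" "(a + h) - x = (c - x) - h" by (simp_all add: c_def)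
  have t1: "1 / (2 - \<alpha>) * (- (2 - \<alpha>) * ((c - x) / q)) = - ((c - x) / q)"
    using n2 q0 by (simp add: field_simps)
  have t2: "3 * h / (1 - \<alpha>) * (- (1 - \<alpha>) * (1 / q)) = - (3 * h / q)"
    using n1 q0 by (simp add: field_simps)
  have t3: "2 * h ^ 2 / \<alpha> * (- (- \<alpha>) * (1 / ((c - x) * q))) = 2 * h ^ 2 / ((c - x) * q)"
    using n0 q0 y by (simp add: field_simps)
  have t4: "- (z / q) - - (3 * h / q) - 2 * h ^ 2 / (z * q) = (2 * h - z) * (z - h) * (1 / (z * q))"
    if "z > 0" for z
    using that q0 by (simp add: field_simps power2_eq_square)
  have "1 / (2 - \<alpha>) * (- (2 - \<alpha>) * (c - x) powr (2 - \<alpha> - 1))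
         - 3 * h / (1 - \<alpha>) * (- (1 - \<alpha>) * (c - x) powr (1 - \<alpha> - 1))
         - 2 * h ^ 2 / \<alpha> * (- (- \<alpha>) * (c - x) powr (- \<alpha> - 1))
         = (x - a) * ((a + h) - x) * (c - x) powr (- \<alpha> - 1)"
    unfolding e powr_quotient_forms[OF y] q_def[symmetric] t1 t2 t3 t4[OF y] shift ..
  moreover have "((\<lambda>\<tau>. 1 / (2 - \<alpha>) * (c - \<tau>) powr (2 - \<alpha>)
                 - 3 * h / (1 - \<alpha>) * (c - \<tau>) powr (1 - \<alpha>)
                 - 2 * h ^ 2 / \<alpha> * (c - \<tau>) powr (- \<alpha>))
      has_real_derivative
        1 / (2 - \<alpha>) * (- (2 - \<alpha>) * (c - x) powr (2 - \<alpha> - 1))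
         - 3 * h / (1 - \<alpha>) * (- (1 - \<alpha>) * (c - x) powr (1 - \<alpha> - 1))
         - 2 * h ^ 2 / \<alpha> * (- (- \<alpha>) * (c - x) powr (- \<alpha> - 1))) (at x)"
    using y by (intro DERIV_diff DERIV_cmult has_real_derivative_powr_diff) simp_all
  ultimately show ?thesis unfolding c_def by simp
qed

lemma weight_has_integral_penultimate:
  fixes \<alpha> a h :: real
  assumes al: "0 < \<alpha>" "\<alpha> < 1" and h: "0 < h"
  shows "((\<lambda>\<tau>. (\<tau> - a) * ((a + h) - \<tau>) * ((a + 2 * h) - \<tau>) powr (- \<alpha> - 1)) has_integral
           h powr (2 - \<alpha>) * penultimate_weight \<alpha>) {a..a + h}"
proof -
  define c where "c = a + 2 * h"
  define P where "P \<tau> = 1 / (2 - \<alpha>) * (c - \<tau>) powr (2 - \<alpha>)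
                     - 3 * h / (1 - \<alpha>) * (c - \<tau>) powr (1 - \<alpha>)
                     - 2 * h ^ 2 / \<alpha> * (c - \<tau>) powr (- \<alpha>)" for \<tau>
  have "continuous_on {a..a + h} P"
    unfolding P_def by (intro continuous_intros) (use h in \<open>auto simp: c_def\<close>)
  moreover have "(P has_vector_derivative ((x - a) * ((a + h) - x) * (c - x) powr (- \<alpha> - 1))) (at x)"
    if "x \<in> {a<..<a + h}" for x
    unfolding P_def c_def has_real_derivative_iff_has_vector_derivative[symmetric]
    by (rule weight_penultimate_antiderivative[OF al]) (use that h in simp)
  ultimately have "((\<lambda>x. (x - a) * ((a + h) - x) * (c - x) powr (- \<alpha> - 1))
                      has_integral (P (a + h) - P a)) {a..a + h}"
    using fundamental_theorem_of_calculus_interior[of a "a + h" P] h by simp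
  moreover have "P (a + h) - P a = h powr (2 - \<alpha>) * penultimate_weight \<alpha>"
  proof -
    have c1: "c - (a + h) = h" and c2: "c - a = 2 * h" by (simp_all add: c_def)
    have h2: "0 < 2 * h" using h by simp
    define r where "r = h powr \<alpha>"
    define t where "t = 2 powr \<alpha>"
    have rt: "(2 * h) powr \<alpha> = t * r" using h by (simp add: r_def t_def powr_mult)
    have "P (a + h) = h ^ 2 / r * (1 / (2 - \<alpha>) - 3 / (1 - \<alpha>) - 2 / \<alpha>)"
      unfolding P_def c1 powr_quotient_forms[OF h] r_def[symmetric]
      by (simp add: divide_inverse algebra_simps power2_eq_square)
    moreover have "P a = h ^ 2 / r * ((4 / (2 - \<alpha>) - 6 / (1 - \<alpha>) - 2 / \<alpha>) / t)"
      unfolding P_def c2 powr_quotient_forms[OF h2] rt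
      by (simp add: divide_inverse algebra_simps power2_eq_square)
    ultimately show ?thesis
      by (simp add: penultimate_weight_def powr_quotient_forms(3)[OF h] r_def t_def right_diff_distrib)
  qed
  ultimately show ?thesis by (simp add: c_def)
qed

lemma penultimate_weight_nonneg:
  assumes "0 < \<alpha>" "\<alpha> < 1"
  shows "0 \<le> penultimate_weight \<alpha>"
proof -
  have "0 \<le> 1 powr (2 - \<alpha>) * penultimate_weight \<alpha>"
    by (rule has_integral_nonneg[OF weight_has_integral_penultimate[OF assms zero_less_one, of 0]])
      simp
  then show ?thesis by simp
qed

lemma penultimate_weight_identity:
  fixes \<alpha> :: real
  assumes al: "0 < \<alpha>" "\<alpha> < 1"
  shows "\<alpha> / 2 * (1 / ((1 - \<alpha>) * (2 - \<alpha>)) + penultimate_weight \<alpha>)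
         = (2 powr (2 - \<alpha>) / (2 - \<alpha>) - (1 + 2 powr (- \<alpha>))) / (1 - \<alpha>)"
proof -
  define t where "t = 2 powr \<alpha>"
  define i1 where "i1 = 1 / (1 - \<alpha>)"
  define i2 where "i2 = 1 / (2 - \<alpha>)"
  define i0 where "i0 = 1 / \<alpha>"
  define it where "it = 1 / t"
  have "i1 * (1 - \<alpha>) = 1" "i2 * (2 - \<alpha>) = 1" "i0 * \<alpha> = 1" "it * t = 1"
    using al by (simp_all add: i1_def i2_def i0_def it_def t_def)
  then have "\<alpha> / 2 * (i1 * i2 + ((i2 - 3 * i1 - 2 * i0) - (4 * i2 - 6 * i1 - 2 * i0) * it))
        = (4 * it * i2 - 1 - it) * i1"
    by algebra
  moreover have "1 / ((1 - \<alpha>) * (2 - \<alpha>)) = i1 * i2" by (simp add: i1_def i2_def)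
  moreover have "penultimate_weight \<alpha> = (i2 - 3 * i1 - 2 * i0) - (4 * i2 - 6 * i1 - 2 * i0) * it"
    by (simp add: penultimate_weight_def i1_def i2_def i0_def it_def t_def divide_inverse)
  moreover have "(2 powr (2 - \<alpha>) / (2 - \<alpha>) - (1 + 2 powr (- \<alpha>))) / (1 - \<alpha>)
      = (4 * it * i2 - 1 - it) * i1"
    using powr_quotient_forms(1,3)[of 2 \<alpha>]
    by (simp add: i1_def i2_def it_def t_def divide_inverse)
  ultimately show ?thesis by simp
qed

(* The three summands are the contributions of the early cells, the last cell and the
   penultimate cell, respectively. *)
lemma local_error_constant_split:
  fixes \<alpha> x M :: real
  assumes al: "0 < \<alpha>" "\<alpha> < 1"
  shows "x / (1 - \<alpha>) * ((1 - \<alpha>) / 12 + 2 powr (2 - \<alpha>) / (2 - \<alpha>) - (1 + 2 powr (- \<alpha>))) * M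
    = M / 12 * x + M / 2 * \<alpha> * (x / ((1 - \<alpha>) * (2 - \<alpha>))) + M / 2 * \<alpha> * (x * penultimate_weight \<alpha>)"
proof -
  have "x / (1 - \<alpha>) * ((1 - \<alpha>) / 12 + K) * M = M * x * (1 / 12 + K / (1 - \<alpha>))" for K
    using al by (simp add: field_simps)
  also have "M * x * (1 / 12 + (2 powr (2 - \<alpha>) / (2 - \<alpha>) - (1 + 2 powr (- \<alpha>))) / (1 - \<alpha>))
      = M * x * (1 / 12 + \<alpha> / 2 * (1 / ((1 - \<alpha>) * (2 - \<alpha>)) + penultimate_weight \<alpha>))"
    by (simp only: penultimate_weight_identity[OF al])
  also have "\<dots> = M / 12 * x + M / 2 * \<alpha> * (x / ((1 - \<alpha>) * (2 - \<alpha>)))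
                      + M / 2 * \<alpha> * (x * penultimate_weight \<alpha>)"
    by (simp add: algebra_simps)
  finally show ?thesis by (simp only: add_diff_eq)
qed

lemma weight_integral_le:
  fixes \<alpha> a b c :: real
  assumes al: "0 < \<alpha>" and ab: "a < b" "b < c"
  shows "(\<lambda>\<tau>. (\<tau> - a) * (b - \<tau>) * (c - \<tau>) powr (- \<alpha> - 1)) integrable_on {a..b}"
    and "integral {a..b} (\<lambda>\<tau>. (\<tau> - a) * (b - \<tau>) * (c - \<tau>) powr (- \<alpha> - 1))
           \<le> (c - b) powr (- \<alpha> - 1) * (b - a) ^ 3 / 6"
proof -
  show int: "(\<lambda>\<tau>. (\<tau> - a) * (b - \<tau>) * (c - \<tau>) powr (- \<alpha> - 1)) integrable_on {a..b}"
    by (intro integrable_continuous_interval continuous_intros) (use ab in auto)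
  define P where "P \<tau> = - (\<tau> ^ 3 / 3) + (a + b) * \<tau> ^ 2 / 2 - a * b * \<tau>" for \<tau>
  have "((\<lambda>\<tau>. (\<tau> - a) * (b - \<tau>)) has_integral (P b - P a)) {a..b}"
  proof (rule fundamental_theorem_of_calculus_interior)
    show "a \<le> b" using ab by simp
    show "continuous_on {a..b} P" unfolding P_def by (intro continuous_intros) auto
    fix x
    have "(P has_real_derivative (x - a) * (b - x)) (at x)"
      unfolding P_def by (rule derivative_eq_intros refl | simp add: algebra_simps power2_eq_square)+
    then show "(P has_vector_derivative (x - a) * (b - x)) (at x)"
      by (simp only: has_real_derivative_iff_has_vector_derivative)
  qed
  moreover have "P b - P a = (b - a) ^ 3 / 6"
    by (simp add: P_def power3_eq_cube power2_eq_square field_simps)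
  ultimately have hg: "((\<lambda>\<tau>. (c - b) powr (- \<alpha> - 1) * ((\<tau> - a) * (b - \<tau>))) has_integral
             (c - b) powr (- \<alpha> - 1) * ((b - a) ^ 3 / 6)) {a..b}"
    by (intro has_integral_mult_right) simp
  have "(x - a) * (b - x) * (c - x) powr (- \<alpha> - 1) \<le> (c - b) powr (- \<alpha> - 1) * ((x - a) * (b - x))"
    if x: "x \<in> {a..b}" for x
  proof -
    have "(c - x) powr (- \<alpha> - 1) \<le> (c - b) powr (- \<alpha> - 1)"
      by (rule powr_mono2') (use x ab al in auto)
    moreover have "0 \<le> (x - a) * (b - x)" using x by auto
    ultimately show ?thesis by (simp add: mult.commute mult_left_mono)
  qed
  then have "integral {a..b} (\<lambda>\<tau>. (\<tau> - a) * (b - \<tau>) * (c - \<tau>) powr (- \<alpha> - 1))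
      \<le> integral {a..b} (\<lambda>\<tau>. (c - b) powr (- \<alpha> - 1) * ((\<tau> - a) * (b - \<tau>)))"
    by (rule integral_le[OF int has_integral_integrable[OF hg]])
  then show "integral {a..b} (\<lambda>\<tau>. (\<tau> - a) * (b - \<tau>) * (c - \<tau>) powr (- \<alpha> - 1))
           \<le> (c - b) powr (- \<alpha> - 1) * (b - a) ^ 3 / 6"
    unfolding integral_unique[OF hg] by simp
qed

lemma powr_neg_diff_ge:
  fixes \<alpha> x :: real
  assumes al: "0 < \<alpha>" and x: "1 \<le> x"
  shows "\<alpha> * (x + 1) powr (- \<alpha> - 1) \<le> x powr (- \<alpha>) - (x + 1) powr (- \<alpha>)"
proof -
  have "\<exists>z. x < z \<and> z < x + 1 \<and>
      (x + 1) powr (- \<alpha>) - x powr (- \<alpha>) = (x + 1 - x) * (- \<alpha> * z powr (- \<alpha> - 1))"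
  proof (rule MVT2)
    fix y assume "x \<le> y" "y \<le> x + 1"
    then have "y > 0" using x by auto
    then show "((\<lambda>y. y powr (- \<alpha>)) has_real_derivative (- \<alpha> * y powr (- \<alpha> - 1))) (at y)"
      using has_real_derivative_powr[of y "- \<alpha>"] by simp
  qed simp
  then obtain z where z: "x < z" "z < x + 1"
    and mvt: "x powr (- \<alpha>) - (x + 1) powr (- \<alpha>) = \<alpha> * z powr (- \<alpha> - 1)"
    by (auto simp: algebra_simps)
  have "(x + 1) powr (- \<alpha> - 1) \<le> z powr (- \<alpha> - 1)"
    by (rule powr_mono2') (use z x al in auto)
  then show ?thesis using mvt al by (simp add: mult_left_mono)
qed

lemma sum_powr_neg_le_one:
  fixes \<alpha> :: real
  assumes al: "0 < \<alpha>"
  shows "(\<Sum>i<N. \<alpha> * (real i + 2) powr (- \<alpha> - 1)) \<le> 1"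
proof -
  have "(\<Sum>i<N. \<alpha> * (real i + 2) powr (- \<alpha> - 1)) \<le> 1 - (real N + 1) powr (- \<alpha>)"
  proof (induction N)
    case 0
    then show ?case by simp
  next
    case (Suc N)
    have "\<alpha> * (real N + 2) powr (- \<alpha> - 1) \<le> (real N + 1) powr (- \<alpha>) - (real N + 2) powr (- \<alpha>)"
      using powr_neg_diff_ge[OF al, of "real N + 1"] by (simp add: add.assoc)
    then show ?case using Suc by (simp add: add.commute add.left_commute)
  qed
  then show ?thesis by (smt (verit) powr_ge_zero)
qed

section \<open>The FIDR history as a quadrature\<close>

lemma exp_kernel_has_integral:
  fixes s a b c :: real
  assumes "0 < s" "a \<le> b"
  shows "((\<lambda>\<tau>. exp (- s * (c - \<tau>))) has_integral
           (exp (- s * (c - b)) - exp (- s * (c - a))) / s) {a..b}"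
proof -
  define P where "P \<tau> = exp (- s * (c - \<tau>)) / s" for \<tau>
  have "((\<lambda>\<tau>. exp (- s * (c - \<tau>))) has_integral (P b - P a)) {a..b}"
  proof (rule fundamental_theorem_of_calculus_interior)
    show "continuous_on {a..b} P" unfolding P_def by (intro continuous_intros) (use assms in auto)
    fix x
    have "(P has_real_derivative exp (- s * (c - x))) (at x)"
      unfolding P_def using assms by (auto intro!: derivative_eq_intros)
    then show "(P has_vector_derivative exp (- s * (c - x))) (at x)"
      by (simp only: has_real_derivative_iff_has_vector_derivative)
  qed (use assms in simp)
  then show ?thesis by (simp add: P_def diff_divide_distrib)
qed

lemma fidr_psi_Suc_eq_sum:
  "fidr_psi s dt U (Suc m) =
     (\<Sum>j<m. (U (Suc j) - U j) * (1 - exp (- s * dt)) * exp (- s * dt) ^ (m - j) / (s * dt))"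
proof (induction m)
  case 0
  then show ?case by simp
next
  case (Suc m)
  have "exp (- s * dt) * fidr_psi s dt U (Suc m) =
     (\<Sum>j<m. (U (Suc j) - U j) * (1 - exp (- s * dt)) * exp (- s * dt) ^ (Suc m - j) / (s * dt))"
    unfolding Suc sum_distrib_left
    by (rule sum.cong) (auto simp: Suc_diff_le less_imp_le)
  then show ?case by simp
qed

lemma fidr_psi_Suc_eq_sum_integrals:
  assumes s: "0 < s" and dt: "0 < dt"
  shows "fidr_psi s dt U (Suc m) =
    (\<Sum>j<m. (U (Suc j) - U j) / dt
       * integral {real j * dt..real (Suc j) * dt} (\<lambda>\<tau>. exp (- s * (real (Suc m) * dt - \<tau>))))"
  unfolding fidr_psi_Suc_eq_sum
proof (rule sum.cong[OF refl])
  fix j assume "j \<in> {..<m}"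
  then have diffs: "real (Suc m) * dt - real (Suc j) * dt = real (m - j) * dt"
    "real (Suc m) * dt - real j * dt = real (Suc (m - j)) * dt"
    by (auto simp: of_nat_diff algebra_simps)
  have powers: "exp (- s * (real k * dt)) = exp (- s * dt) ^ k" for k
    by (simp add: exp_of_nat_mult[symmetric] algebra_simps)
  have "real j * dt \<le> real (Suc j) * dt" using dt by simp
  from integral_unique[OF exp_kernel_has_integral[OF s this, of "real (Suc m) * dt"]]
  have I: "integral {real j * dt..real (Suc j) * dt} (\<lambda>\<tau>. exp (- s * (real (Suc m) * dt - \<tau>)))
      = (exp (- s * dt) ^ (m - j) - exp (- s * dt) * exp (- s * dt) ^ (m - j)) / s"
    unfolding diffs powers by simp
  show "(U (Suc j) - U j) * (1 - exp (- s * dt)) * exp (- s * dt) ^ (m - j) / (s * dt)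
      = (U (Suc j) - U j) / dt
       * integral {real j * dt..real (Suc j) * dt} (\<lambda>\<tau>. exp (- s * (real (Suc m) * dt - \<tau>)))"
    unfolding I using s dt by (simp add: field_simps)
qed

section \<open>Error on the uniform grid\<close>

lemma Gamma_two_minus:
  fixes \<alpha> :: real
  assumes "\<alpha> < 1"
  shows "Gamma (2 - \<alpha>) = (1 - \<alpha>) * Gamma (1 - \<alpha>)"
proof -
  have "1 - \<alpha> \<notin> \<int>\<^sub>\<le>\<^sub>0" using assms nonpos_Ints_nonpos by force
  then show ?thesis using Gamma_plus1[of "1 - \<alpha>"] by simp
qed

lemma abs_le_SUP_abs:
  fixes f :: "real \<Rightarrow> real"
  assumes "continuous_on {a..b} f" and "x \<in> {a..b}"
  shows "\<bar>f x\<bar> \<le> (SUP t\<in>{a..b}. \<bar>f t\<bar>)"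
proof -
  have "bounded ((\<lambda>t. \<bar>f t\<bar>) ` {a..b})"
    by (intro compact_imp_bounded compact_continuous_image continuous_intros assms(1)) simp
  then show ?thesis using assms(2) by (intro cSUP_upper bounded_imp_bdd_above)
qed

lemma integral_sum_uniform_partition:
  fixes f :: "real \<Rightarrow> real"
  assumes h: "0 \<le> h" and f: "f integrable_on {0..real m * h}"
  shows "integral {0..real m * h} f = (\<Sum>j<m. integral {real j * h..real (Suc j) * h} f)"
  using f
proof (induction m)
  case 0
  then show ?case by simp
next
  case (Suc m)
  have le: "real m * h \<le> real (Suc m) * h" using h by (simp add: mult_right_mono)
  have "f integrable_on {0..real m * h}"
    by (rule integrable_on_subinterval[OF Suc.prems]) (use le in auto)
  moreover have "integral {0..real (Suc m) * h} f
      = integral {0..real m * h} f + integral {real m * h..real (Suc m) * h} f"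
    using Henstock_Kurzweil_Integration.integral_combine[OF _ le Suc.prems, symmetric] h by simp
  ultimately show ?case using Suc.IH by simp
qed

locale caputo_grid =
  fixes \<alpha> dt :: real and n :: nat and u du ddu :: "real \<Rightarrow> real"
  assumes alpha: "0 < \<alpha>" "\<alpha> < 1" and dt_pos: "0 < dt" and n_pos: "1 \<le> n"
    and u_deriv: "\<forall>x\<in>{0..real n * dt}. (u has_real_derivative du x) (at x within {0..real n * dt})"
    and du_deriv: "\<forall>x\<in>{0..real n * dt}. (du has_real_derivative ddu x) (at x within {0..real n * dt})"
    and ddu_cont: "continuous_on {0..real n * dt} ddu"
begin

abbreviation grid :: "nat \<Rightarrow> real" where
  "grid k \<equiv> real k * dt"

definition kernel :: "real \<Rightarrow> real" where
  "kernel \<tau> = (grid n - \<tau>) powr (- \<alpha>)"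

definition approx_kernel :: "nat \<Rightarrow> (nat \<Rightarrow> real) \<Rightarrow> (nat \<Rightarrow> real) \<Rightarrow> real \<Rightarrow> real" where
  "approx_kernel NA s w \<tau> = (\<Sum>i = 1..NA. w i * exp (- s i * (grid n - \<tau>)))"

definition slope :: "nat \<Rightarrow> real" where
  "slope j = (u (grid (Suc j)) - u (grid j)) / dt"

definition local_error :: "nat \<Rightarrow> real" where
  "local_error j = integral {grid j..grid (Suc j)} (\<lambda>\<tau>. (du \<tau> - slope j) * kernel \<tau>)"

lemma grid_step: "grid (Suc j) - grid j = dt"
  by (simp add: algebra_simps)

lemma grid_less_Suc: "grid j < grid (Suc j)"
  using dt_pos by simp

lemma cell_subset: "j < n \<Longrightarrow> {grid j..grid (Suc j)} \<subseteq> {0..grid n}"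
  using dt_pos by (auto intro: order_trans[OF _ mult_right_mono[of "real (Suc j)" "real n"]])

lemma u_cont: "continuous_on {0..grid n} u"
  by (rule DERIV_continuous_on) (use u_deriv in blast)

lemma du_cont: "continuous_on {0..grid n} du"
  by (rule DERIV_continuous_on) (use du_deriv in blast)

lemma u_deriv_at:
  assumes "0 < x" "x < grid n"
  shows "(u has_real_derivative du x) (at x)"
proof -
  have "at x within {0..grid n} = at x" by (rule at_within_interior) (use assms in simp)
  moreover have "(u has_real_derivative du x) (at x within {0..grid n})"
    using u_deriv assms by simp
  ultimately show ?thesis by simp
qed

lemma du_deriv_at:
  assumes "0 < x" "x < grid n"
  shows "(du has_real_derivative ddu x) (at x)"
proof -
  have "at x within {0..grid n} = at x" by (rule at_within_interior) (use assms in simp)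
  moreover have "(du has_real_derivative ddu x) (at x within {0..grid n})"
    using du_deriv assms by simp
  ultimately show ?thesis by simp
qed

lemma kernel_integrable: "kernel integrable_on {0..grid n}"
  using kernel_has_integral[OF alpha, of 0 "grid n"] dt_pos unfolding kernel_def by auto

lemma du_kernel_integrable: "(\<lambda>\<tau>. du \<tau> * kernel \<tau>) integrable_on {0..grid n}"
  unfolding kernel_def
  by (rule continuous_mult_kernel_integrable[OF alpha _ order.refl du_cont]) (use dt_pos in simp)

lemma caputo_eq_sum:
  "Gamma (1 - \<alpha>) * caputo \<alpha> du (grid n)
     = (\<Sum>j<n. local_error j) + (\<Sum>j<n. slope j * integral {grid j..grid (Suc j)} kernel)"
proof -
  have cell: "integral {grid j..grid (Suc j)} (\<lambda>\<tau>. du \<tau> * kernel \<tau>)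
      = local_error j + slope j * integral {grid j..grid (Suc j)} kernel" if "j < n" for j
  proof -
    have "(\<lambda>\<tau>. du \<tau> * kernel \<tau>) integrable_on {grid j..grid (Suc j)}"
      and "kernel integrable_on {grid j..grid (Suc j)}"
      using integrable_on_subinterval[OF _ cell_subset[OF that]]
        du_kernel_integrable kernel_integrable by blast+
    from integral_diff[OF this(1) integrable_on_mult_right[OF this(2)]]
    show ?thesis by (simp add: local_error_def left_diff_distrib)
  qed
  have "Gamma (1 - \<alpha>) * caputo \<alpha> du (grid n) = integral {0..grid n} (\<lambda>\<tau>. du \<tau> * kernel \<tau>)"
    using Gamma_real_pos[of "1 - \<alpha>"] alpha
    by (simp add: caputo_def kernel_def powr_minus_divide divide_inverse less_imp_neq[symmetric])
  also have "\<dots> = (\<Sum>j<n. integral {grid j..grid (Suc j)} (\<lambda>\<tau>. du \<tau> * kernel \<tau>))"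
    by (rule integral_sum_uniform_partition[OF less_imp_le[OF dt_pos] du_kernel_integrable])
  also have "\<dots> = (\<Sum>j<n. local_error j + slope j * integral {grid j..grid (Suc j)} kernel)"
    by (rule sum.cong[OF refl], rule cell) simp
  finally show ?thesis by (simp add: sum.distrib)
qed

lemma kernel_integral_last_cell:
  "integral {grid (n - 1)..grid n} kernel = dt powr (1 - \<alpha>) / (1 - \<alpha>)"
proof -
  have "grid (n - 1) \<le> grid n" and diff: "grid n - grid (n - 1) = dt"
    using n_pos dt_pos by (simp_all add: of_nat_diff algebra_simps)
  from integral_unique[OF kernel_has_integral[OF alpha this(1) order.refl]]
  show ?thesis unfolding kernel_def diff using alpha by simp
qed

lemma fidr_history_eq:
  assumes s: "\<forall>i\<in>{1..NA}. 0 < s i"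
  shows "(\<Sum>i = 1..NA. w i * fidr_psi (s i) dt (\<lambda>k. u (grid k)) n)
     = (\<Sum>j<n - 1. slope j * integral {grid j..grid (Suc j)} (approx_kernel NA s w))"
proof -
  obtain m where m: "n = Suc m" using n_pos by (cases n) auto
  have cell: "integral {grid j..grid (Suc j)} (approx_kernel NA s w)
      = (\<Sum>i = 1..NA. w i * integral {grid j..grid (Suc j)} (\<lambda>\<tau>. exp (- s i * (grid n - \<tau>))))"
    for j
    unfolding approx_kernel_def
    by (subst integral_sum) (auto intro!: integrable_continuous_interval continuous_intros)
  have "(\<Sum>i = 1..NA. w i * fidr_psi (s i) dt (\<lambda>k. u (grid k)) n)
      = (\<Sum>i = 1..NA. \<Sum>j<m. w i * (slope j
          * integral {grid j..grid (Suc j)} (\<lambda>\<tau>. exp (- s i * (grid n - \<tau>)))))"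
    using s dt_pos
    by (intro sum.cong refl)
      (simp add: fidr_psi_Suc_eq_sum_integrals[of _ dt _ m, folded m] slope_def sum_distrib_left)
  also have "\<dots> = (\<Sum>j<m. slope j * integral {grid j..grid (Suc j)} (approx_kernel NA s w))"
    unfolding cell sum_distrib_left by (subst sum.swap) (simp add: mult_ac)
  finally show ?thesis using m by simp
qed

lemma fidr_eq_sum:
  assumes "\<forall>i\<in>{1..NA}. 0 < s i"
  shows "Gamma (1 - \<alpha>) * fidr \<alpha> dt NA s w (\<lambda>k. u (grid k)) n
     = slope (n - 1) * integral {grid (n - 1)..grid n} kernel
       + (\<Sum>j<n - 1. slope j * integral {grid j..grid (Suc j)} (approx_kernel NA s w))"
proof -
  have G: "Gamma (1 - \<alpha>) > 0" using alpha by (simp add: Gamma_real_pos)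
  have "g * (d / (p * ((1 - \<alpha>) * g))) = d / dt * (dt / p / (1 - \<alpha>))"
    if "0 < g" "0 < p" for g p d
    using that alpha dt_pos by (simp add: field_simps)
  then have "Gamma (1 - \<alpha>) * ((u (grid n) - u (grid (n - 1))) / (dt powr \<alpha> * Gamma (2 - \<alpha>)))
      = slope (n - 1) * (dt powr (1 - \<alpha>) / (1 - \<alpha>))"
    unfolding Gamma_two_minus[OF alpha(2)] slope_def powr_quotient_forms(2)[OF dt_pos]
    using G dt_pos n_pos by simp
  then show ?thesis
    unfolding fidr_def fidr_history_eq[OF assms] kernel_integral_last_cell
    using G by (simp add: distrib_left)
qed

lemma fidr_error_eq:
  assumes "\<forall>i\<in>{1..NA}. 0 < s i"
  shows "Gamma (1 - \<alpha>) * (caputo \<alpha> du (grid n) - fidr \<alpha> dt NA s w (\<lambda>k. u (grid k)) n)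
     = (\<Sum>j<n. local_error j)
       + (\<Sum>j<n - 1. slope j * (integral {grid j..grid (Suc j)} kernel
                                 - integral {grid j..grid (Suc j)} (approx_kernel NA s w)))"
proof -
  obtain m where m: "n = Suc m" using n_pos by (cases n) auto
  show ?thesis
    using caputo_eq_sum fidr_eq_sum[OF assms]
    by (simp add: m right_diff_distrib sum_subtractf)
qed

lemma slope_eq_du:
  assumes "j < n"
  obtains \<xi> where "grid j < \<xi>" "\<xi> < grid (Suc j)" "slope j = du \<xi>"
proof -
  have sub: "{grid j..grid (Suc j)} \<subseteq> {0..grid n}" by (rule cell_subset[OF assms])
  have "continuous_on {grid j..grid (Suc j)} u" by (rule continuous_on_subset[OF u_cont sub])
  moreover have "(u has_derivative (*) (du x)) (at x)" if "grid j < x" "x < grid (Suc j)" for x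
    using u_deriv_at[of x] that sub grid_less_Suc[of j]
    by (auto simp: has_field_derivative_def)
  ultimately obtain \<xi> where "grid j < \<xi>" "\<xi> < grid (Suc j)"
      "u (grid (Suc j)) - u (grid j) = du \<xi> * dt"
    using mvt[OF grid_less_Suc[of j], of u "\<lambda>x. (*) (du x)"] grid_step by metis
  then show ?thesis using that dt_pos by (simp add: slope_def)
qed

lemma abs_slope_le:
  assumes "j < n - 1"
  shows "\<bar>slope j\<bar> \<le> (SUP t\<in>{0..grid (n - 1)}. \<bar>du t\<bar>)"
proof -
  have "j < n" using assms by simp
  then obtain \<xi> where \<xi>: "grid j < \<xi>" "\<xi> < grid (Suc j)" "slope j = du \<xi>"
    by (rule slope_eq_du)
  have "grid (Suc j) \<le> grid (n - 1)" using assms dt_pos by (intro mult_right_mono) auto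
  moreover have "0 \<le> grid j" using dt_pos by simp
  ultimately have "\<xi> \<in> {0..grid (n - 1)}" using \<xi>(1,2) by (simp only: atLeastAtMost_iff) linarith
  moreover have "{0..grid (n - 1)} \<subseteq> {0..grid n}" using dt_pos by (auto intro: order_trans mult_right_mono)
  ultimately show ?thesis
    using abs_le_SUP_abs[OF continuous_on_subset[OF du_cont]] \<xi>(3) by metis
qed

lemma approx_kernel_integral_error:
  assumes approx: "\<forall>t\<in>{dt..grid n}. \<bar>t powr (- \<alpha>) - (\<Sum>i = 1..NA. w i * exp (- s i * t))\<bar> \<le> \<epsilon>0"
    and j: "j < n - 1"
  shows "\<bar>integral {grid j..grid (Suc j)} kernel - integral {grid j..grid (Suc j)} (approx_kernel NA s w)\<bar>
           \<le> \<epsilon>0 * dt"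
proof -
  have sub: "{grid j..grid (Suc j)} \<subseteq> {0..grid n}" by (rule cell_subset) (use j in simp)
  have "dt \<le> grid n" using n_pos dt_pos by simp
  then have "0 \<le> \<epsilon>0" using approx by (meson abs_ge_zero atLeastAtMost_iff order.refl order_trans)
  moreover have "((\<lambda>\<tau>. kernel \<tau> - approx_kernel NA s w \<tau>) has_integral
      integral {grid j..grid (Suc j)} kernel - integral {grid j..grid (Suc j)} (approx_kernel NA s w))
      {grid j..grid (Suc j)}"
    unfolding approx_kernel_def
    by (intro has_integral_diff integrable_integral integrable_on_subinterval[OF kernel_integrable sub]
        integrable_continuous_interval continuous_intros)
  moreover have "norm (kernel \<tau> - approx_kernel NA s w \<tau>) \<le> \<epsilon>0"
    if \<tau>: "\<tau> \<in> {grid j..grid (Suc j)}" for \<tau>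
  proof -
    \<comment> \<open>Away from the last cell the kernel argument stays in the range where the approximation holds.\<close>
    have "(real (Suc j) + 1) * dt \<le> grid n" using j dt_pos by (intro mult_right_mono) auto
    then have "dt \<le> grid n - \<tau>" using \<tau> by (simp add: algebra_simps)
    moreover have "0 \<le> \<tau>" using \<tau> dt_pos by (auto intro: order_trans[rotated])
    then have "grid n - \<tau> \<le> grid n" by simp
    ultimately show ?thesis using approx by (simp add: kernel_def approx_kernel_def)
  qed
  ultimately have "norm (integral {grid j..grid (Suc j)} kernel - integral {grid j..grid (Suc j)} (approx_kernel NA s w))
      \<le> \<epsilon>0 * measure lborel {grid j..grid (Suc j)}"
    by (intro has_integral_bound_real[of _ "{}"]) auto
  then show ?thesis using grid_less_Suc[of j] by (simp add: algebra_simps)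
qed

lemma history_error_bound:
  assumes "\<forall>t\<in>{dt..grid n}. \<bar>t powr (- \<alpha>) - (\<Sum>i = 1..NA. w i * exp (- s i * t))\<bar> \<le> \<epsilon>0"
  shows "\<bar>\<Sum>j<n - 1. slope j * (integral {grid j..grid (Suc j)} kernel
                                 - integral {grid j..grid (Suc j)} (approx_kernel NA s w))\<bar>
           \<le> \<epsilon>0 * grid (n - 1) * (SUP t\<in>{0..grid (n - 1)}. \<bar>du t\<bar>)"
proof -
  define B where "B = (SUP t\<in>{0..grid (n - 1)}. \<bar>du t\<bar>)"
  have "\<bar>slope j * (integral {grid j..grid (Suc j)} kernel
                     - integral {grid j..grid (Suc j)} (approx_kernel NA s w))\<bar> \<le> B * (\<epsilon>0 * dt)"
    if "j < n - 1" for j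
    unfolding abs_mult B_def
    by (intro mult_mono abs_slope_le approx_kernel_integral_error[OF assms] that
        order_trans[OF abs_ge_zero abs_slope_le[OF that]]) simp
  then have "\<bar>\<Sum>j<n - 1. slope j * (integral {grid j..grid (Suc j)} kernel
                                 - integral {grid j..grid (Suc j)} (approx_kernel NA s w))\<bar>
      \<le> (\<Sum>j<n - 1. B * (\<epsilon>0 * dt))"
    by (intro order_trans[OF sum_abs sum_mono]) simp
  moreover have "(\<Sum>j<n - 1. B * (\<epsilon>0 * dt)) = \<epsilon>0 * grid (n - 1) * B" by (simp add: mult_ac)
  ultimately show ?thesis unfolding B_def by (rule ord_le_eq_trans)
qed

lemma SUP_abs_ddu_nonneg: "0 \<le> (SUP t\<in>{0..grid n}. \<bar>ddu t\<bar>)"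
  using abs_le_SUP_abs[OF ddu_cont, of 0] dt_pos by (force intro: order_trans[OF abs_ge_zero])

lemma local_error_bound:
  assumes j: "j < n"
    and J: "((\<lambda>\<tau>. (\<tau> - grid j) * (grid (Suc j) - \<tau>) * (grid n - \<tau>) powr (- \<alpha> - 1))
              has_integral J) {grid j..grid (Suc j)}"
  shows "\<bar>local_error j\<bar> \<le> (SUP t\<in>{0..grid n}. \<bar>ddu t\<bar>) / 2 * \<alpha> * J"
proof -
  have sub: "{grid j..grid (Suc j)} \<subseteq> {0..grid n}" by (rule cell_subset[OF j])
  then have inner: "0 < x" "x < grid n" if "grid j < x" "x < grid (Suc j)" for x
    using that grid_less_Suc[of j] by auto
  have "\<bar>integral {grid j..grid (Suc j)}
           (\<lambda>\<tau>. (du \<tau> - (u (grid (Suc j)) - u (grid j)) / (grid (Suc j) - grid j)) * (grid n - \<tau>) powr (- \<alpha>))\<bar>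
      \<le> (SUP t\<in>{0..grid n}. \<bar>ddu t\<bar>) / 2 * \<alpha> * J"
  proof (rule kernel_integral_slope_deviation_bound[OF alpha grid_less_Suc _ _ _ _ _ _ J])
    show "grid (Suc j) \<le> grid n" using sub grid_less_Suc[of j] by auto
    show "continuous_on {grid j..grid (Suc j)} u" by (rule continuous_on_subset[OF u_cont sub])
    show "continuous_on {grid j..grid (Suc j)} du" by (rule continuous_on_subset[OF du_cont sub])
    fix x assume "grid j < x" "x < grid (Suc j)"
    note x = inner[OF this]
    show "(u has_real_derivative du x) (at x)" by (rule u_deriv_at[OF x])
    show "(du has_real_derivative ddu x) (at x)" by (rule du_deriv_at[OF x])
    show "\<bar>ddu x\<bar> \<le> (SUP t\<in>{0..grid n}. \<bar>ddu t\<bar>)" using x by (intro abs_le_SUP_abs[OF ddu_cont]) auto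
  qed
  then show ?thesis unfolding grid_step by (simp add: local_error_def slope_def kernel_def)
qed

lemma local_error_last_bound:
  "\<bar>local_error (n - 1)\<bar>
     \<le> (SUP t\<in>{0..grid n}. \<bar>ddu t\<bar>) / 2 * \<alpha> * (dt powr (2 - \<alpha>) / ((1 - \<alpha>) * (2 - \<alpha>)))"
proof -
  have Suc: "Suc (n - 1) = n" using n_pos by simp
  have diff: "grid n - grid (n - 1) = dt" using grid_step[of "n - 1"] by (simp only: Suc)
  have "grid (n - 1) < grid n" using grid_less_Suc[of "n - 1"] by (simp only: Suc)
  from weight_has_integral_last[OF alpha this]
  have "((\<lambda>\<tau>. (\<tau> - grid (n - 1)) * (grid (Suc (n - 1)) - \<tau>) * (grid n - \<tau>) powr (- \<alpha> - 1))
      has_integral dt powr (2 - \<alpha>) / ((1 - \<alpha>) * (2 - \<alpha>))) {grid (n - 1)..grid (Suc (n - 1))}"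
    unfolding Suc diff .
  then show ?thesis by (rule local_error_bound[rotated]) (use n_pos in simp)
qed

lemma local_error_penultimate_bound:
  assumes "2 \<le> n"
  shows "\<bar>local_error (n - 2)\<bar>
     \<le> (SUP t\<in>{0..grid n}. \<bar>ddu t\<bar>) / 2 * \<alpha> * (dt powr (2 - \<alpha>) * penultimate_weight \<alpha>)"
proof -
  have shift: "grid (n - 2) + dt = grid (Suc (n - 2))" "grid (n - 2) + 2 * dt = grid n"
    using assms by (simp_all add: of_nat_diff algebra_simps)
  from weight_has_integral_penultimate[OF alpha dt_pos, of "grid (n - 2)", unfolded shift]
  show ?thesis by (rule local_error_bound[rotated]) (use assms in simp)
qed

lemma local_error_early_bound:
  assumes j: "Suc j < n - 1"
  shows "\<bar>local_error j\<bar>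
     \<le> (SUP t\<in>{0..grid n}. \<bar>ddu t\<bar>) / 12 * dt powr (2 - \<alpha>) * (\<alpha> * real (n - Suc j) powr (- \<alpha> - 1))"
proof -
  define M where "M = (SUP t\<in>{0..grid n}. \<bar>ddu t\<bar>)"
  define k where "k = real (n - Suc j)"
  have dist: "grid n - grid (Suc j) = k * dt"
    using j by (simp add: k_def of_nat_diff algebra_simps)
  have "(k * dt) powr (- \<alpha> - 1) = k powr (- \<alpha> - 1) * dt powr (- \<alpha> - 1)"
    using dt_pos by (simp add: k_def powr_mult)
  moreover have "dt powr (- \<alpha> - 1) * dt ^ 3 = dt powr (2 - \<alpha>)"
  proof -
    have "dt ^ 3 = dt powr 3" using dt_pos by (simp add: powr_numeral)
    then have "dt powr (- \<alpha> - 1) * dt ^ 3 = dt powr (- \<alpha> - 1 + 3)"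
      by (simp only: powr_add)
    also have "- \<alpha> - 1 + 3 = 2 - \<alpha>" by simp
    finally show ?thesis .
  qed
  ultimately have scale: "(grid n - grid (Suc j)) powr (- \<alpha> - 1) * dt ^ 3 = k powr (- \<alpha> - 1) * dt powr (2 - \<alpha>)"
    unfolding dist by (simp only: mult.assoc)
  have "grid (Suc j) < grid n" using j dt_pos by simp
  note weight = weight_integral_le[OF alpha(1) grid_less_Suc this]
  have "\<bar>local_error j\<bar> \<le> M / 2 * \<alpha>
      * integral {grid j..grid (Suc j)} (\<lambda>\<tau>. (\<tau> - grid j) * (grid (Suc j) - \<tau>) * (grid n - \<tau>) powr (- \<alpha> - 1))"
    unfolding M_def using j by (intro local_error_bound integrable_integral weight(1)) simp
  also have "\<dots> \<le> M / 2 * \<alpha> * ((grid n - grid (Suc j)) powr (- \<alpha> - 1) * dt ^ 3 / 6)"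
    using weight(2) SUP_abs_ddu_nonneg alpha unfolding M_def grid_step by (intro mult_left_mono) auto
  also have "\<dots> = M / 12 * dt powr (2 - \<alpha>) * (\<alpha> * k powr (- \<alpha> - 1))"
    unfolding scale by simp
  finally show ?thesis unfolding M_def k_def .
qed

lemma local_errors_early_sum_bound:
  "\<bar>\<Sum>j<n - 2. local_error j\<bar> \<le> (SUP t\<in>{0..grid n}. \<bar>ddu t\<bar>) / 12 * dt powr (2 - \<alpha>)"
proof -
  define C where "C = (SUP t\<in>{0..grid n}. \<bar>ddu t\<bar>) / 12 * dt powr (2 - \<alpha>)"
  have C0: "0 \<le> C" using SUP_abs_ddu_nonneg by (simp add: C_def)
  have "\<bar>\<Sum>j<n - 2. local_error j\<bar> \<le> (\<Sum>j<n - 2. C * (\<alpha> * real (n - Suc j) powr (- \<alpha> - 1)))"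
    unfolding C_def by (intro order_trans[OF sum_abs sum_mono] local_error_early_bound) auto
  also have "\<dots> = C * (\<Sum>j<n - 2. \<alpha> * (real (n - 2 - Suc j) + 2) powr (- \<alpha> - 1))"
  proof -
    have shift: "real (n - Suc j) = real (n - 2 - Suc j) + 2" if "j < n - 2" for j
    proof -
      have "n - Suc j = (n - 2 - Suc j) + 2" using that by simp
      then show ?thesis by (simp only: of_nat_add)
    qed
    then show ?thesis unfolding sum_distrib_left by (intro sum.cong refl) (simp only: lessThan_iff shift)
  qed
  also have "\<dots> = C * (\<Sum>j<n - 2. \<alpha> * (real j + 2) powr (- \<alpha> - 1))"
    by (subst sum.nat_diff_reindex[where g = "\<lambda>j. \<alpha> * (real j + 2) powr (- \<alpha> - 1)"]) (rule refl)
  also have "\<dots> \<le> C"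
    using mult_left_mono[OF sum_powr_neg_le_one[OF alpha(1)] C0] by simp
  finally show ?thesis unfolding C_def .
qed

lemma local_errors_sum_bound:
  "\<bar>\<Sum>j<n. local_error j\<bar>
     \<le> dt powr (2 - \<alpha>) / (1 - \<alpha>)
        * ((1 - \<alpha>) / 12 + 2 powr (2 - \<alpha>) / (2 - \<alpha>) - (1 + 2 powr (- \<alpha>)))
        * (SUP t\<in>{0..grid n}. \<bar>ddu t\<bar>)"
proof -
  define M where "M = (SUP t\<in>{0..grid n}. \<bar>ddu t\<bar>)"
  define h where "h = dt powr (2 - \<alpha>)"
  have M0: "0 \<le> M" and h0: "0 \<le> h" using SUP_abs_ddu_nonneg by (simp_all add: M_def h_def)
  have w0: "0 \<le> penultimate_weight \<alpha>" by (rule penultimate_weight_nonneg[OF alpha])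
  have last: "\<bar>local_error (n - 1)\<bar> \<le> M / 2 * \<alpha> * (h / ((1 - \<alpha>) * (2 - \<alpha>)))"
    using local_error_last_bound unfolding M_def h_def .
  have "\<bar>\<Sum>j<n. local_error j\<bar>
      \<le> M / 12 * h + M / 2 * \<alpha> * (h / ((1 - \<alpha>) * (2 - \<alpha>))) + M / 2 * \<alpha> * (h * penultimate_weight \<alpha>)"
  proof (cases "n = 1")
    case True
    then have "(\<Sum>j<n. local_error j) = local_error (n - 1)" by simp
    moreover have "0 \<le> M / 12 * h" and "0 \<le> M / 2 * \<alpha> * (h * penultimate_weight \<alpha>)"
      using M0 h0 w0 alpha by simp_all
    ultimately show ?thesis using last by linarith
  next
    case False
    then obtain p where p: "n = Suc (Suc p)" using n_pos by (intro that[of "n - 2"]) simp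
    then have "{..<n} = {..<Suc (Suc p)}" "n - 2 = p" "n - 1 = Suc p" by simp_all
    then have "(\<Sum>j<n. local_error j) = (\<Sum>j<n - 2. local_error j) + local_error (n - 2) + local_error (n - 1)"
      by simp
    moreover have "\<bar>\<Sum>j<n - 2. local_error j\<bar> \<le> M / 12 * h"
      using local_errors_early_sum_bound unfolding M_def h_def .
    moreover have "\<bar>local_error (n - 2)\<bar> \<le> M / 2 * \<alpha> * (h * penultimate_weight \<alpha>)"
      using local_error_penultimate_bound p unfolding M_def h_def by simp
    ultimately show ?thesis using last by linarith
  qed
  then show ?thesis unfolding M_def[symmetric] local_error_constant_split[OF alpha] h_def .
qed

end

theorem theorem7:
  fixes \<alpha> T \<epsilon>0 :: real and NT NA n :: nat
    and s w :: "nat \<Rightarrow> real" and u du ddu :: "real \<Rightarrow> real"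
  defines "dt \<equiv> T / real NT"
  assumes "0 < \<alpha>" and "\<alpha> < 1" and "0 < T" and "0 < NT"
    and "\<forall>i\<in>{1..NA}. 0 < s i \<and> 0 < w i"
    and "\<forall>t\<in>{dt..T}. \<bar>t powr (- \<alpha>) - (\<Sum>i = 1..NA. w i * exp (- s i * t))\<bar> \<le> \<epsilon>0"
    and "1 \<le> n" and "n \<le> NT"
    and "\<forall>x\<in>{0..real n * dt}. (u has_real_derivative du x) (at x within {0..real n * dt})"
    and "\<forall>x\<in>{0..real n * dt}. (du has_real_derivative ddu x) (at x within {0..real n * dt})"
    and "continuous_on {0..real n * dt} ddu"
  shows "\<bar>caputo \<alpha> du (real n * dt) - fidr \<alpha> dt NA s w (\<lambda>k. u (real k * dt)) n\<bar>
    \<le> dt powr (2 - \<alpha>) / Gamma (2 - \<alpha>)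
        * ((1 - \<alpha>) / 12 + 2 powr (2 - \<alpha>) / (2 - \<alpha>) - (1 + 2 powr (- \<alpha>)))
        * (SUP t\<in>{0..real n * dt}. \<bar>ddu t\<bar>)
      + \<epsilon>0 * (real (n - 1) * dt) / Gamma (1 - \<alpha>)
        * (SUP t\<in>{0..real (n - 1) * dt}. \<bar>du t\<bar>)"
proof -
  have dt_pos: "0 < dt" using assms(4,5) by (simp add: dt_def)
  interpret caputo_grid \<alpha> dt n u du ddu
    using assms(2,3,8,10-12) dt_pos by unfold_locales auto
  have "real n * dt \<le> T"
    using assms(5,9) dt_pos mult_right_mono[of "real n" "real NT" dt] by (simp add: dt_def)
  then have approx: "\<forall>t\<in>{dt..real n * dt}. \<bar>t powr (- \<alpha>) - (\<Sum>i = 1..NA. w i * exp (- s i * t))\<bar> \<le> \<epsilon>0"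
    using assms(7) by auto
  \<comment> \<open>Only the exponents s i need to be positive.\<close>
  have s_pos: "\<forall>i\<in>{1..NA}. 0 < s i" using assms(6) by blast
  define R where "R = caputo \<alpha> du (real n * dt) - fidr \<alpha> dt NA s w (\<lambda>k. u (real k * dt)) n"
  define C where "C = (1 - \<alpha>) / 12 + 2 powr (2 - \<alpha>) / (2 - \<alpha>) - (1 + 2 powr (- \<alpha>))"
  define M where "M = (SUP t\<in>{0..real n * dt}. \<bar>ddu t\<bar>)"
  define B where "B = (SUP t\<in>{0..real (n - 1) * dt}. \<bar>du t\<bar>)"
  have "\<bar>Gamma (1 - \<alpha>) * R\<bar> \<le> dt powr (2 - \<alpha>) / (1 - \<alpha>) * C * M + \<epsilon>0 * (real (n - 1) * dt) * B"
    unfolding R_def C_def M_def B_def fidr_error_eq[OF s_pos]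
    by (rule order_trans[OF abs_triangle_ineq
          add_mono[OF local_errors_sum_bound history_error_bound[OF approx]]])
  moreover have "0 < Gamma (1 - \<alpha>)" using assms(3) by (simp add: Gamma_real_pos)
  ultimately have "\<bar>R\<bar> \<le> (dt powr (2 - \<alpha>) / (1 - \<alpha>) * C * M + \<epsilon>0 * (real (n - 1) * dt) * B) / Gamma (1 - \<alpha>)"
    by (simp add: abs_mult pos_le_divide_eq mult.commute)
  also have "\<dots> = dt powr (2 - \<alpha>) / Gamma (2 - \<alpha>) * C * M + \<epsilon>0 * (real (n - 1) * dt) / Gamma (1 - \<alpha>) * B"
    unfolding Gamma_two_minus[OF assms(3)] by (simp add: add_divide_distrib)
  finally show ?thesis unfolding R_def C_def M_def B_def .
qed

end
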